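(* Let $\theta,r_0>0$ and let $A\subseteq\mathbb R^n$ be a set of finite perimeter such that $\theta r^{n-1}\le P(A,B_r(x))$ for every $x\in\partial A$ and every $r\in(0,r_0]$. Then for every $\ell>0$ and every set of finite perimeter $B\subseteq\mathbb R^n$, $$|B\Delta A|\le\frac{5^n\omega_n}{\theta}\max\Big\{1,\Big(\frac{\ell}{r_0}\Big)^{n-1}\Big\}P(A)\,\ell+\frac1\ell\int_{A\Delta B}\mathrm{dist}(x,\partial A)\,dx .$$
   Context: $|\cdot|$ is Lebesgue measure, $\omega_n=|B_1(0)|$, $B_r(x)$ the open Euclidean ball, $P(A,\Omega)$ the (Euclidean) perimeter of $A$ in the open set $\Omega$, $P(A)=P(A,\mathbb R^n)$, $\mathrm{dist}$ the Euclidean distance. Sets of finite perimeter are normalized to coincide with their points of Lebesgue density one, so that $\partial A$ (topological boundary) is the closure of the reduced boundary. $A\Delta B$ is the symmetric difference. *)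

theory Defs
  imports "HOL-Analysis.Analysis"
begin

definition divergence :: "('a::euclidean_space \<Rightarrow> 'a) \<Rightarrow> 'a \<Rightarrow> real" where
  "divergence \<phi> x = (\<Sum>i\<in>Basis. frechet_derivative \<phi> (at x) i \<bullet> i)"

definition admissible_fields :: "'a::euclidean_space set \<Rightarrow> ('a \<Rightarrow> 'a) set" where
  "admissible_fields \<Omega> = {\<phi>. (\<forall>x. \<phi> differentiable (at x))
      \<and> (\<forall>v. continuous_on UNIV (\<lambda>x. frechet_derivative \<phi> (at x) v))
      \<and> compact (closure {x. \<phi> x \<noteq> 0}) \<and> closure {x. \<phi> x \<noteq> 0} \<subseteq> \<Omega>
      \<and> (\<forall>x. norm (\<phi> x) \<le> 1)}"

definition perimeter :: "'a::euclidean_space set \<Rightarrow> 'a set \<Rightarrow> ennreal" where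
  "perimeter A \<Omega> = (SUP \<phi>\<in>admissible_fields \<Omega>. ennreal (integral A (divergence \<phi>)))"

definition finite_perimeter :: "'a::euclidean_space set \<Rightarrow> bool" where
  "finite_perimeter A \<longleftrightarrow> A \<in> sets lebesgue \<and> perimeter A UNIV < \<infinity>"

definition density_one_points :: "'a::euclidean_space set \<Rightarrow> 'a set" where
  "density_one_points A = {x. ((\<lambda>r. measure lebesgue (A \<inter> ball x r) / measure lebesgue (ball x r))
        \<longlongrightarrow> 1) (at_right 0)}"

text \<open>Distance from a point to a set, with value \<infinity> for the empty set.\<close>
definition edist_set :: "'a::metric_space \<Rightarrow> 'a set \<Rightarrow> ennreal" where
  "edist_set x S = (INF y\<in>S. ennreal (dist x y))"

end

theory Submission
  imports Defs
begin

text \<open>The perimeter is superadditive on disjoint sets, since admissible fields with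
  disjoint supports can be added. Choose a maximal \<open>2l\<close>-separated set \<open>X\<close> of points of
  \<open>\<partial>A\<close>: the balls \<open>B\<^sub>l(x)\<close>, \<open>x \<in> X\<close>, are disjoint and each carries perimeter at least
  \<open>\<theta> min(l,r\<^sub>0)\<^bsup>n-1\<^esup>\<close>, which bounds \<open>#X\<close> by \<open>P(A)\<close>; by maximality the balls \<open>B\<^sub>3\<^sub>l(x)\<close> cover
  the \<open>l\<close>-neighbourhood of \<open>\<partial>A\<close>. This bounds the part of \<open>A \<Delta> B\<close> near \<open>\<partial>A\<close>; on the
  rest \<open>dist(x,\<partial>A) \<ge> l\<close> and Chebyshev's inequality applies.\<close>

lemma admissible_fields_derivative_outside_support:
  assumes "\<phi> \<in> admissible_fields \<Omega>" "x \<notin> closure {x. \<phi> x \<noteq> 0}"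
  shows "frechet_derivative \<phi> (at x) = (\<lambda>_. 0)"
proof -
  have "frechet_derivative \<phi> (at x) = frechet_derivative (\<lambda>_. 0::'a) (at x)"
    by (rule frechet_derivative_transform_within_open[where X="- closure {x. \<phi> x \<noteq> 0}"])
      (use assms in \<open>auto simp: admissible_fields_def intro: closure_subset[THEN subsetD]\<close>)
  then show ?thesis by simp
qed

lemma continuous_on_divergence_admissible:
  assumes "\<phi> \<in> admissible_fields \<Omega>"
  shows "continuous_on UNIV (divergence \<phi>)"
proof -
  have "\<And>i. continuous_on UNIV (\<lambda>x. frechet_derivative \<phi> (at x) i)"
    using assms by (auto simp: admissible_fields_def)
  then show ?thesis unfolding divergence_def[abs_def]
    by (intro continuous_on_sum continuous_intros) auto
qed

lemma divergence_admissible_integrable_on: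
  fixes \<phi> :: "'a::euclidean_space \<Rightarrow> 'a"
  assumes "\<phi> \<in> admissible_fields \<Omega>" "A \<in> sets lebesgue"
  shows "divergence \<phi> integrable_on A"
proof -
  have "compact (closure {x. \<phi> x \<noteq> 0})"
    using assms(1) by (simp add: admissible_fields_def)
  then obtain a b where ab: "closure {x. \<phi> x \<noteq> 0} \<subseteq> cbox a b"
    using compact_imp_bounded bounded_subset_cbox_symmetric by metis
  have "divergence \<phi> absolutely_integrable_on cbox a b"
    using continuous_on_divergence_admissible[OF assms(1)]
      absolutely_integrable_continuous continuous_on_subset by blast
  then have "(\<lambda>x. if x \<in> cbox a b then divergence \<phi> x else 0) absolutely_integrable_on UNIV"
    by (simp add: absolutely_integrable_restrict_UNIV)
  also have "(\<lambda>x. if x \<in> cbox a b then divergence \<phi> x else 0) = divergence \<phi>"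
    using ab admissible_fields_derivative_outside_support[OF assms(1)]
    by (force simp: divergence_def)
  finally have "divergence \<phi> absolutely_integrable_on UNIV" .
  then show ?thesis
    using set_integrable_subset assms(2) absolutely_integrable_on_def by blast
qed

lemma frechet_derivative_add_at:
  assumes "f differentiable (at x)" "g differentiable (at x)"
  shows "frechet_derivative (\<lambda>x. f x + g x) (at x) =
    (\<lambda>v. frechet_derivative f (at x) v + frechet_derivative g (at x) v)"
  using assms by (intro frechet_derivative_at[symmetric] has_derivative_add)
    (auto simp: frechet_derivative_works[symmetric])

lemma divergence_add:
  fixes \<phi> \<psi> :: "'a::euclidean_space \<Rightarrow> 'a"
  assumes "\<phi> differentiable (at x)" "\<psi> differentiable (at x)"
  shows "divergence (\<lambda>x. \<phi> x + \<psi> x) x = divergence \<phi> x + divergence \<psi> x"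
  by (simp add: divergence_def frechet_derivative_add_at[OF assms] inner_add_left sum.distrib)

lemma admissible_fields_add_disjoint:
  fixes \<phi> \<psi> :: "'a::euclidean_space \<Rightarrow> 'a"
  assumes \<phi>: "\<phi> \<in> admissible_fields U" and \<psi>: "\<psi> \<in> admissible_fields V" and "U \<inter> V = {}"
  shows "(\<lambda>x. \<phi> x + \<psi> x) \<in> admissible_fields (U \<union> V)"
proof -
  let ?S = "\<lambda>f :: 'a \<Rightarrow> 'a. closure {x. f x \<noteq> 0}"
  have SU: "?S \<phi> \<subseteq> U" and SV: "?S \<psi> \<subseteq> V" and "compact (?S \<phi>)" "compact (?S \<psi>)"
    and norm_le: "norm (\<phi> x) \<le> 1" "norm (\<psi> x) \<le> 1"
    and diff: "\<phi> differentiable (at x)" "\<psi> differentiable (at x)"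
    and cont: "continuous_on UNIV (\<lambda>x. frechet_derivative \<phi> (at x) v)"
      "continuous_on UNIV (\<lambda>x. frechet_derivative \<psi> (at x) v)" for x v
    using \<phi> \<psi> by (simp_all add: admissible_fields_def)
  have "{x. \<phi> x + \<psi> x \<noteq> 0} \<subseteq> {x. \<phi> x \<noteq> 0} \<union> {x. \<psi> x \<noteq> 0}"
    by auto
  then have supp: "?S (\<lambda>x. \<phi> x + \<psi> x) \<subseteq> ?S \<phi> \<union> ?S \<psi>"
    using closure_mono closure_Un by blast
  have "compact ((?S \<phi> \<union> ?S \<psi>) \<inter> ?S (\<lambda>x. \<phi> x + \<psi> x))"
    using \<open>compact (?S \<phi>)\<close> \<open>compact (?S \<psi>)\<close> by (intro compact_Int_closed compact_Un) simp_all
  moreover have "(?S \<phi> \<union> ?S \<psi>) \<inter> ?S (\<lambda>x. \<phi> x + \<psi> x) = ?S (\<lambda>x. \<phi> x + \<psi> x)"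
    using supp by blast
  moreover have "norm (\<phi> x + \<psi> x) \<le> 1" for x
  proof -
    have "x \<notin> ?S \<phi> \<or> x \<notin> ?S \<psi>"
      using SU SV \<open>U \<inter> V = {}\<close> by blast
    then have "\<phi> x = 0 \<or> \<psi> x = 0"
      using closure_subset[of "{x. \<phi> x \<noteq> 0}"] closure_subset[of "{x. \<psi> x \<noteq> 0}"] by blast
    then show ?thesis
      using norm_le by auto
  qed
  moreover have "continuous_on UNIV (\<lambda>x. frechet_derivative (\<lambda>x. \<phi> x + \<psi> x) (at x) v)" for v
    using cont by (simp add: frechet_derivative_add_at[OF diff] continuous_on_add)
  moreover have "?S (\<lambda>x. \<phi> x + \<psi> x) \<subseteq> U \<union> V"
    using supp SU SV by blast
  ultimately show ?thesis
    using diff by (simp add: admissible_fields_def differentiable_add)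
qed

lemma perimeter_mono: "U \<subseteq> V \<Longrightarrow> perimeter A U \<le> perimeter A V"
  unfolding perimeter_def by (rule SUP_subset_mono) (auto simp: admissible_fields_def)

lemma perimeter_Un_disjoint_ge:
  fixes A :: "'a::euclidean_space set"
  assumes "A \<in> sets lebesgue" "U \<inter> V = {}"
  shows "perimeter A U + perimeter A V \<le> perimeter A (U \<union> V)"
proof -
  let ?I = "\<lambda>\<phi>. integral A (divergence \<phi>)"
  have nonempty: "admissible_fields W \<noteq> {}" for W :: "'a set"
  proof -
    have "(\<lambda>_. 0) \<in> admissible_fields W" by (simp add: admissible_fields_def)
    then show ?thesis by blast
  qed
  have upper: "ennreal (?I \<phi>) \<le> perimeter A (U \<union> V)" if "\<phi> \<in> admissible_fields (U \<union> V)" for \<phi>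
    unfolding perimeter_def using that by (rule SUP_upper)
  have pair: "ennreal (?I \<phi>) + ennreal (?I \<psi>) \<le> perimeter A (U \<union> V)"
    if \<phi>: "\<phi> \<in> admissible_fields U" and \<psi>: "\<psi> \<in> admissible_fields V" for \<phi> \<psi>
  proof (cases "?I \<phi> < 0 \<or> ?I \<psi> < 0")
    case True
    moreover have "\<phi> \<in> admissible_fields (U \<union> V)" "\<psi> \<in> admissible_fields (U \<union> V)"
      using \<phi> \<psi> by (auto simp: admissible_fields_def)
    ultimately show ?thesis
      using upper by (auto simp: ennreal_neg)
  next
    case False
    have "divergence (\<lambda>x. \<phi> x + \<psi> x) = (\<lambda>x. divergence \<phi> x + divergence \<psi> x)"
      using \<phi> \<psi> by (intro ext divergence_add) (auto simp: admissible_fields_def)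
    then have "?I (\<lambda>x. \<phi> x + \<psi> x) = ?I \<phi> + ?I \<psi>"
      using \<phi> \<psi> by (simp add: integral_add divergence_admissible_integrable_on assms(1))
    then show ?thesis
      using False upper[OF admissible_fields_add_disjoint[OF \<phi> \<psi> assms(2)]]
      by (simp add: ennreal_plus)
  qed
  have "perimeter A U + perimeter A V =
      (SUP \<phi>\<in>admissible_fields U. SUP \<psi>\<in>admissible_fields V. ennreal (?I \<phi>) + ennreal (?I \<psi>))"
  proof -
    have "perimeter A U + perimeter A V = (SUP \<phi>\<in>admissible_fields U. ennreal (?I \<phi>) + perimeter A V)"
      unfolding perimeter_def[of A U] by (rule ennreal_SUP_add_left[OF nonempty, symmetric])
    then show ?thesis
      unfolding perimeter_def[of A V] by (simp add: ennreal_SUP_add_right[OF nonempty])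
  qed
  also have "\<dots> \<le> perimeter A (U \<union> V)"
    by (intro SUP_least pair)
  finally show ?thesis .
qed

lemma perimeter_UN_disjoint_ge:
  fixes A :: "'a::euclidean_space set"
  assumes "A \<in> sets lebesgue" "finite I" "disjoint_family_on U I"
  shows "(\<Sum>i\<in>I. perimeter A (U i)) \<le> perimeter A (\<Union>i\<in>I. U i)"
  using assms(2,3)
proof (induction I rule: finite_induct)
  case (insert i I)
  then have "(\<Sum>i\<in>insert i I. perimeter A (U i)) \<le> perimeter A (U i) + perimeter A (\<Union>i\<in>I. U i)"
    by (simp add: disjoint_family_on_insert add_left_mono)
  also have "\<dots> \<le> perimeter A (\<Union>i\<in>insert i I. U i)"
    using insert perimeter_Un_disjoint_ge[OF assms(1)] by (simp add: disjoint_family_on_insert)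
  finally show ?case .
qed simp

lemma disjoint_family_on_balls_separated:
  assumes "pairwise (\<lambda>x y. 2 * r \<le> dist x y) X"
  shows "disjoint_family_on (\<lambda>x. ball x r) X"
  unfolding disjoint_family_on_def
proof (intro ballI impI)
  fix x y assume "x \<in> X" "y \<in> X" "x \<noteq> y"
  then have "2 * r \<le> dist x y"
    using assms by (simp add: pairwise_def)
  then show "ball x r \<inter> ball y r = {}"
    using dist_triangle_less_add[of x _ r y r] by (force simp: dist_commute)
qed

lemma separated_net_exists:
  fixes F :: "'a::metric_space set"
  assumes "d > 0"
    and "\<And>X. finite X \<Longrightarrow> X \<subseteq> F \<Longrightarrow> pairwise (\<lambda>x y. d \<le> dist x y) X \<Longrightarrow> card X \<le> K"
  obtains X where "finite X" "X \<subseteq> F" "pairwise (\<lambda>x y. d \<le> dist x y) X"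
    and "F \<subseteq> (\<Union>x\<in>X. ball x d)"
proof -
  let ?sep = "\<lambda>X. finite X \<and> X \<subseteq> F \<and> pairwise (\<lambda>x y. d \<le> dist x y) X"
  have "\<forall>X. ?sep X \<longrightarrow> card X < Suc K"
    using assms(2) by (simp add: less_Suc_eq_le)
  then obtain X where X: "?sep X" and maximal: "\<And>Y. ?sep Y \<Longrightarrow> card Y \<le> card X"
    using ex_has_greatest_nat[of ?sep "{}" card "Suc K"] by auto
  have "F \<subseteq> (\<Union>x\<in>X. ball x d)"
  proof
    fix y assume "y \<in> F"
    show "y \<in> (\<Union>x\<in>X. ball x d)"
    proof (rule ccontr)
      assume "y \<notin> (\<Union>x\<in>X. ball x d)"
      then have "y \<notin> X" and "?sep (insert y X)"
        using X \<open>y \<in> F\<close> \<open>d > 0\<close> by (auto simp: pairwise_insert dist_commute)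
      then show False
        using maximal[of "insert y X"] X by simp
    qed
  qed
  then show ?thesis
    using X that by blast
qed

lemma emeasure_UN_balls_le:
  fixes X :: "'a::euclidean_space set"
  assumes "finite X" "r \<ge> 0"
  shows "emeasure lebesgue (\<Union>x\<in>X. ball x r)
    \<le> ennreal (real (card X) * r ^ DIM('a) * measure lebesgue (ball (0::'a) 1))"
proof -
  have "emeasure lebesgue (\<Union>x\<in>X. ball x r) \<le> (\<Sum>x\<in>X. emeasure lebesgue (ball x r))"
    using assms(1) by (intro emeasure_subadditive_finite) auto
  also have "\<dots> = (\<Sum>x\<in>X. ennreal (r ^ DIM('a) * measure lebesgue (ball (0::'a) 1)))"
    by (intro sum.cong refl) (simp add: emeasure_eq_measure2 content_ball_conv_unit_ball[OF assms(2)])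
  also have "\<dots> = ennreal (real (card X) * r ^ DIM('a) * measure lebesgue (ball (0::'a) 1))"
    using assms(2) by (simp add: ennreal_mult' ennreal_of_nat_eq_real_of_nat mult.assoc)
  finally show ?thesis .
qed

lemma emeasure_diff_neighbourhood_le_nn_integral_edist:
  fixes M :: "'a::metric_space measure"
  assumes "D \<in> sets M" "(\<Union>z\<in>F. ball z l) \<in> sets M" "l > 0"
  shows "emeasure M (D - (\<Union>z\<in>F. ball z l)) \<le> ennreal (1 / l) * (\<integral>\<^sup>+ x \<in> D. edist_set x F \<partial>M)"
proof -
  let ?N = "\<Union>z\<in>F. ball z l"
  have far: "ennreal l \<le> edist_set x F" if "x \<notin> ?N" for x
    unfolding edist_set_def using that by (intro INF_greatest) (auto simp: not_less dist_commute)
  have "ennreal l * emeasure M (D - ?N) = (\<integral>\<^sup>+ x. ennreal l * indicator (D - ?N) x \<partial>M)"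
    using assms(1,2) by (simp add: nn_integral_cmult_indicator)
  also have "\<dots> \<le> (\<integral>\<^sup>+ x \<in> D. edist_set x F \<partial>M)"
    by (intro nn_integral_mono) (auto simp: indicator_def far)
  finally have "ennreal (1 / l) * (ennreal l * emeasure M (D - ?N))
      \<le> ennreal (1 / l) * (\<integral>\<^sup>+ x \<in> D. edist_set x F \<partial>M)"
    by (rule mult_left_mono) simp
  then show ?thesis
    using assms(3) by (simp add: mult.assoc[symmetric] ennreal_mult'[symmetric])
qed

lemma card_separated_le_perimeter:
  fixes A :: "'a::euclidean_space set"
  assumes "A \<in> sets lebesgue" "perimeter A UNIV = ennreal p" "p \<ge> 0" "c > 0"
    and "finite X" "pairwise (\<lambda>x y. 2 * l \<le> dist x y) X"
    and "\<And>x. x \<in> X \<Longrightarrow> ennreal c \<le> perimeter A (ball x l)"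
  shows "real (card X) \<le> p / c"
proof -
  have "ennreal (real (card X) * c) = (\<Sum>x\<in>X. ennreal c)"
    using assms(4) by (simp add: ennreal_mult' ennreal_of_nat_eq_real_of_nat)
  also have "\<dots> \<le> (\<Sum>x\<in>X. perimeter A (ball x l))"
    using assms(7) by (rule sum_mono)
  also have "\<dots> \<le> perimeter A (\<Union>x\<in>X. ball x l)"
    using assms(1,5) disjoint_family_on_balls_separated[OF assms(6)] by (rule perimeter_UN_disjoint_ge)
  also have "\<dots> \<le> perimeter A UNIV"
    by (rule perimeter_mono) simp
  finally have "real (card X) * c \<le> p"
    using assms(2,3) by simp
  then show ?thesis
    using assms(4) by (simp add: field_simps)
qed

lemma emeasure_neighbourhood_le_perimeter:
  fixes A F :: "'a::euclidean_space set"
  assumes "A \<in> sets lebesgue" "perimeter A UNIV = ennreal p" "p \<ge> 0" "c > 0" "l > 0"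
    and "\<And>x. x \<in> F \<Longrightarrow> ennreal c \<le> perimeter A (ball x l)"
  shows "emeasure lebesgue (\<Union>z\<in>F. ball z l)
    \<le> ennreal (p / c * (3 * l) ^ DIM('a) * measure lebesgue (ball (0::'a) 1))"
proof -
  have card_le: "card X \<le> nat \<lfloor>p / c\<rfloor>"
    if "finite X" "X \<subseteq> F" "pairwise (\<lambda>x y. 2 * l \<le> dist x y) X" for X
  proof -
    have "real (card X) \<le> p / c"
      using card_separated_le_perimeter[OF assms(1-4) that(1,3)] assms(6) that(2) by blast
    then show ?thesis by linarith
  qed
  have "2 * l > 0"
    using assms(5) by simp
  then obtain X where X: "finite X" "X \<subseteq> F" "pairwise (\<lambda>x y. 2 * l \<le> dist x y) X"
    and cover: "F \<subseteq> (\<Union>x\<in>X. ball x (2 * l))"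
    by (rule separated_net_exists[OF _ card_le])
  have "(\<Union>z\<in>F. ball z l) \<subseteq> (\<Union>x\<in>X. ball x (3 * l))"
  proof
    fix y assume "y \<in> (\<Union>z\<in>F. ball z l)"
    then obtain z where "z \<in> F" "dist z y < l"
      by auto
    moreover obtain x where "x \<in> X" "dist x z < 2 * l"
      using cover \<open>z \<in> F\<close> by auto
    ultimately show "y \<in> (\<Union>x\<in>X. ball x (3 * l))"
      using dist_triangle_less_add[of x z "2 * l" y l] by (auto simp: dist_commute)
  qed
  moreover have "open (\<Union>x\<in>X. ball x (3 * l))"
    by auto
  ultimately have "emeasure lebesgue (\<Union>z\<in>F. ball z l) \<le> emeasure lebesgue (\<Union>x\<in>X. ball x (3 * l))"
    by (intro emeasure_mono) auto
  also have "\<dots> \<le> ennreal (real (card X) * (3 * l) ^ DIM('a) * measure lebesgue (ball (0::'a) 1))"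
    using X(1) assms(5) by (intro emeasure_UN_balls_le) auto
  also have "\<dots> \<le> ennreal (p / c * (3 * l) ^ DIM('a) * measure lebesgue (ball (0::'a) 1))"
    using card_separated_le_perimeter[OF assms(1-4) X(1,3)] X(2) assms(5,6)
    by (intro ennreal_leI mult_right_mono) auto
  finally show ?thesis .
qed

lemma power_div_min_power_le_max:
  fixes l r0 :: real
  assumes "l > 0" "r0 > 0"
  shows "l ^ m / min l r0 ^ m \<le> max 1 ((l / r0) ^ m)"
  using assms by (cases "l \<le> r0") (auto simp: power_divide min_def)

lemma neighbourhood_constant_le:
  fixes \<theta> r0 l \<omega> p :: real
  assumes "\<theta> > 0" "r0 > 0" "l > 0" "\<omega> \<ge> 0" "p \<ge> 0"
  shows "p / (\<theta> * min l r0 ^ m) * (3 * l) ^ Suc m * \<omega>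
    \<le> 5 ^ Suc m * \<omega> / \<theta> * max 1 ((l / r0) ^ m) * p * l"
proof -
  have "min l r0 > 0"
    using assms(2,3) by simp
  then have "p / (\<theta> * min l r0 ^ m) * (3 * l) ^ Suc m * \<omega>
      = (p * \<omega> * l / \<theta>) * (3 ^ Suc m * (l ^ m / min l r0 ^ m))"
    by (simp add: power_mult_distrib field_simps)
  also have "\<dots> \<le> (p * \<omega> * l / \<theta>) * (5 ^ Suc m * max 1 ((l / r0) ^ m))"
    using power_div_min_power_le_max[OF assms(3,2), of m] power_mono[of "3::real" 5 "Suc m"] assms
    by (intro mult_left_mono mult_mono) auto
  also have "\<dots> = 5 ^ Suc m * \<omega> / \<theta> * max 1 ((l / r0) ^ m) * p * l"
    by simp
  finally show ?thesis .
qed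

lemma emeasure_neighbourhood_le_lower_density:
  fixes A F :: "'a::euclidean_space set"
  assumes "\<theta> > 0" "r0 > 0" "l > 0" "A \<in> sets lebesgue" "perimeter A UNIV = ennreal p" "p \<ge> 0"
    and "\<And>x r. x \<in> F \<Longrightarrow> 0 < r \<Longrightarrow> r \<le> r0 \<Longrightarrow>
           ennreal (\<theta> * r ^ (DIM('a) - 1)) \<le> perimeter A (ball x r)"
  shows "emeasure lebesgue (\<Union>z\<in>F. ball z l)
    \<le> ennreal (5 ^ DIM('a) * measure lebesgue (ball (0::'a) 1) / \<theta>
                * max 1 ((l / r0) ^ (DIM('a) - 1)) * p * l)"
proof -
  define c where "c = \<theta> * min l r0 ^ (DIM('a) - 1)"
  have "c > 0"
    using assms(1-3) by (simp add: c_def)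
  have "ennreal c \<le> perimeter A (ball x l)" if "x \<in> F" for x
  proof -
    have "ennreal c \<le> perimeter A (ball x (min l r0))"
      using assms(7)[OF that, of "min l r0"] assms(2,3) by (simp add: c_def)
    also have "\<dots> \<le> perimeter A (ball x l)"
      by (rule perimeter_mono) (simp add: subset_ball)
    finally show ?thesis .
  qed
  then have "emeasure lebesgue (\<Union>z\<in>F. ball z l)
      \<le> ennreal (p / c * (3 * l) ^ DIM('a) * measure lebesgue (ball (0::'a) 1))"
    by (rule emeasure_neighbourhood_le_perimeter[OF assms(4-6) \<open>c > 0\<close> assms(3)])
  also have "\<dots> \<le> ennreal (5 ^ DIM('a) * measure lebesgue (ball (0::'a) 1) / \<theta>
                * max 1 ((l / r0) ^ (DIM('a) - 1)) * p * l)"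
    using neighbourhood_constant_le[OF assms(1-3) measure_nonneg assms(6), of "DIM('a) - 1"]
    unfolding c_def Suc_diff_1[OF DIM_positive] by (rule ennreal_leI)
  finally show ?thesis .
qed

theorem proposition3p3:
  fixes A B :: "'a::euclidean_space set" and \<theta> r0 l :: real
  assumes "\<theta> > 0" and "r0 > 0"
    and "finite_perimeter A" and "A = density_one_points A"
    and "\<And>x r. x \<in> frontier A \<Longrightarrow> 0 < r \<Longrightarrow> r \<le> r0 \<Longrightarrow>
           ennreal (\<theta> * r ^ (DIM('a) - 1)) \<le> perimeter A (ball x r)"
    and "l > 0"
    and "finite_perimeter B" and "B = density_one_points B"
  shows "emeasure lebesgue ((B - A) \<union> (A - B))
     \<le> ennreal (5 ^ DIM('a) * measure lebesgue (ball (0::'a) 1) / \<theta>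
                 * max 1 ((l / r0) ^ (DIM('a) - 1)))
         * perimeter A UNIV * ennreal l
       + ennreal (1 / l) * (\<integral>\<^sup>+ x \<in> ((A - B) \<union> (B - A)). edist_set x (frontier A) \<partial>lebesgue)"
proof -
  let ?N = "\<Union>z\<in>frontier A. ball z l" and ?D = "(A - B) \<union> (B - A)"
  obtain p where p: "perimeter A UNIV = ennreal p" "p \<ge> 0"
    using assms(3) by (cases "perimeter A UNIV") (auto simp: finite_perimeter_def)
  have A: "A \<in> sets lebesgue" and D: "?D \<in> sets lebesgue"
    using assms(3,7) by (auto simp: finite_perimeter_def)
  have "open ?N"
    by auto
  then have N: "?N \<in> sets lebesgue"
    by auto
  have near: "emeasure lebesgue ?N
      \<le> ennreal (5 ^ DIM('a) * measure lebesgue (ball (0::'a) 1) / \<theta>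
                 * max 1 ((l / r0) ^ (DIM('a) - 1))) * perimeter A UNIV * ennreal l"
    using emeasure_neighbourhood_le_lower_density[OF assms(1,2,6) A p assms(5)] assms(1,6) p
    by (simp add: ennreal_mult[symmetric])
  have far: "emeasure lebesgue (?D - ?N)
      \<le> ennreal (1 / l) * (\<integral>\<^sup>+ x \<in> ?D. edist_set x (frontier A) \<partial>lebesgue)"
    using D N assms(6) by (rule emeasure_diff_neighbourhood_le_nn_integral_edist)
  have "emeasure lebesgue ((B - A) \<union> (A - B)) \<le> emeasure lebesgue (?N \<union> (?D - ?N))"
    using D N by (intro emeasure_mono) auto
  also have "\<dots> \<le> emeasure lebesgue ?N + emeasure lebesgue (?D - ?N)"
    using D N by (intro emeasure_subadditive) auto
  finally show ?thesis
    using near far by (meson add_mono order_trans)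
qed

end
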